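(* Let $(G,f)\in\mathcal C$ with $|V(G)|=\aleph_0$. If $P$ is a hereditary property and $P(G,f)$ holds, then $G$ possesses a perfect $f$-factor.
   Context: A graph is $G=(V,E)$ with $V$ a nonempty set and $E\subseteq\{e\subseteq V:|e|=2\}$. For $F\subseteq E$ and $x\in V$, $d_F(x)$ is the cardinal $|\{e\in F:x\in e\}|$. For $f:V\to$ Cardinals, an $f$-factor of $G$ is $F\subseteq E$ with $d_F(x)\le f(x)$ for all $x$; it is perfect if $d_F(x)=f(x)$ for all $x$. $\mathcal C$ is the class of all pairs $(G,f)$ with $G=(V,E)$ a graph, $f:V\to$ Cardinals, and $f(x)\le d_E(x)$ for all $x\in V$. A property $P$ is a class of pairs; $P(G,f)$ means that $(G,f)\in\mathcal C$ and $(G,f)$ has property $P$. For $x,y\in V$, $G-\{x,y\}$ denotes $(V,E\setminus\{\{x,y\}\})$, and $f_{x,y}(v)=f(v)-1$ if $v\in\{x,y\}$ and $1\le f(v)<\aleph_0$, $f_{x,y}(v)=f(v)$ otherwise. $P$ is hereditary if for every $(G,f)$ with $P(G,f)$ and every $x\in V(G)$ with $f(x)>0$ there is $y\in V(G)$ with $f(y)>0$, $\{x,y\}\in E(G)$ and $P(G-\{x,y\},f_{x,y})$. *)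

theory Defs
  imports Main "HOL-Library.Extended_Nat"
begin

(* A graph is a pair (V, E); cardinal values are represented in enat,
   where \<infinity> stands for aleph_0 (sufficient: all degrees in the
   countable graphs considered are at most aleph_0). *)

definition is_graph :: "'a set \<Rightarrow> 'a set set \<Rightarrow> bool" where
  "is_graph V E \<longleftrightarrow> V \<noteq> {} \<and> E \<subseteq> {e. e \<subseteq> V \<and> card e = 2}"

definition deg :: "'a set set \<Rightarrow> 'a \<Rightarrow> enat" where
  "deg F x = (if finite {e\<in>F. x \<in> e} then enat (card {e\<in>F. x \<in> e}) else \<infinity>)"

definition is_factor :: "'a set \<Rightarrow> 'a set set \<Rightarrow> ('a \<Rightarrow> enat) \<Rightarrow> 'a set set \<Rightarrow> bool" where
  "is_factor V E f F \<longleftrightarrow> F \<subseteq> E \<and> (\<forall>x\<in>V. deg F x \<le> f x)"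

definition is_perfect_factor :: "'a set \<Rightarrow> 'a set set \<Rightarrow> ('a \<Rightarrow> enat) \<Rightarrow> 'a set set \<Rightarrow> bool" where
  "is_perfect_factor V E f F \<longleftrightarrow> F \<subseteq> E \<and> (\<forall>x\<in>V. deg F x = f x)"

definition inC :: "'a set \<Rightarrow> 'a set set \<Rightarrow> ('a \<Rightarrow> enat) \<Rightarrow> bool" where
  "inC V E f \<longleftrightarrow> is_graph V E \<and> (\<forall>x\<in>V. f x \<le> deg E x)"

(* P(G,f): (G,f) in C and (G,f) has property P *)
definition holds :: "('a set \<Rightarrow> 'a set set \<Rightarrow> ('a \<Rightarrow> enat) \<Rightarrow> bool)
    \<Rightarrow> 'a set \<Rightarrow> 'a set set \<Rightarrow> ('a \<Rightarrow> enat) \<Rightarrow> bool" where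
  "holds P V E f \<longleftrightarrow> inC V E f \<and> P V E f"

definition fxy :: "('a \<Rightarrow> enat) \<Rightarrow> 'a \<Rightarrow> 'a \<Rightarrow> 'a \<Rightarrow> enat" where
  "fxy f x y v = (if v \<in> {x, y} \<and> 1 \<le> f v \<and> f v < \<infinity> then f v - 1 else f v)"

definition hereditary :: "('a set \<Rightarrow> 'a set set \<Rightarrow> ('a \<Rightarrow> enat) \<Rightarrow> bool) \<Rightarrow> bool" where
  "hereditary P \<longleftrightarrow> (\<forall>V E f. holds P V E f \<longrightarrow>
     (\<forall>x\<in>V. f x > 0 \<longrightarrow>
        (\<exists>y\<in>V. f y > 0 \<and> {x, y} \<in> E \<and> holds P V (E - {{x, y}}) (fxy f x y))))"

end

theory Submission
  imports Defs "HOL-Library.Countable_Set"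
begin

(* Enumerate V so that every vertex recurs infinitely often and run a greedy process:
   whenever the current vertex x still has positive residual demand, heredity supplies a
   partner y such that the edge {x, y} can be moved into the factor while P survives on the
   remaining graph with f_{x,y}.  The chosen edges are pairwise distinct, as each is removed
   from the graph when chosen.  A vertex of finite demand k is used at most k times, since
   its residual demand plus its number of uses stays k; it is used exactly k times, since it
   recurs after its last use and would be used again if its residual demand were positive.
   A vertex of infinite demand keeps it forever and is used at every visit. *)

definition round_robin :: "'a set \<Rightarrow> nat \<Rightarrow> 'a" where
  "round_robin V n = from_nat_into V (fst (prod_decode n))"

lemma round_robin_in: "V \<noteq> {} \<Longrightarrow> round_robin V n \<in> V"
  unfolding round_robin_def by (rule from_nat_into)

lemma round_robin_recurs:
  assumes "countable V" "v \<in> V"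
  shows "\<exists>m\<ge>N. round_robin V m = v"
proof
  let ?m = "prod_encode (to_nat_on V v, N)"
  show "?m \<ge> N \<and> round_robin V ?m = v"
    using assms by (simp add: round_robin_def le_prod_encode_2 from_nat_into_to_nat_on)
qed

lemma finite_nat_set_if_initial_counts_bounded:
  fixes S :: "nat set"
  assumes "\<And>n. card (S \<inter> {..<n}) \<le> k"
  shows "finite S"
proof (rule ccontr)
  assume "infinite S"
  then obtain A where A: "A \<subseteq> S" "finite A" "card A = Suc k"
    using infinite_arbitrarily_large by blast
  then obtain n where "A \<subseteq> {..<n}"
    using finite_nat_bounded by blast
  with A have "card A \<le> card (S \<inter> {..<n})"
    by (intro card_mono) auto
  with A assms[of n] show False by simp
qed

lemma deg_image_inj:
  assumes "inj_on g A"
  shows "deg (g ` A) v =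
    (if finite {m\<in>A. v \<in> g m} then enat (card {m\<in>A. v \<in> g m}) else \<infinity>)"
proof -
  have edges: "{e \<in> g ` A. v \<in> e} = g ` {m\<in>A. v \<in> g m}" by auto
  have inj: "inj_on g {m\<in>A. v \<in> g m}" using assms by (rule inj_on_subset) auto
  show ?thesis
    unfolding deg_def edges using finite_image_iff[OF inj] card_image[OF inj] by simp
qed

definition partner ::
    "('a set \<Rightarrow> 'a set set \<Rightarrow> ('a \<Rightarrow> enat) \<Rightarrow> bool) \<Rightarrow> 'a set \<Rightarrow> 'a set set \<Rightarrow> ('a \<Rightarrow> enat) \<Rightarrow> 'a \<Rightarrow> 'a"
  where "partner P V E f x =
    (SOME y. y \<in> V \<and> f y > 0 \<and> {x, y} \<in> E \<and> holds P V (E - {{x, y}}) (fxy f x y))"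

lemma partner:
  assumes "hereditary P" "holds P V E f" "x \<in> V" "f x > 0"
  defines "y \<equiv> partner P V E f x"
  shows "y \<in> V" "f y > 0" "{x, y} \<in> E" "holds P V (E - {{x, y}}) (fxy f x y)"
proof -
  have "\<exists>y. y \<in> V \<and> f y > 0 \<and> {x, y} \<in> E \<and> holds P V (E - {{x, y}}) (fxy f x y)"
    using assms(1-4) unfolding hereditary_def by blast
  then have "y \<in> V \<and> f y > 0 \<and> {x, y} \<in> E \<and> holds P V (E - {{x, y}}) (fxy f x y)"
    unfolding y_def partner_def by (rule someI_ex)
  then show "y \<in> V" "f y > 0" "{x, y} \<in> E" "holds P V (E - {{x, y}}) (fxy f x y)"
    by auto
qed

definition greedy_step ::
    "('a set \<Rightarrow> 'a set set \<Rightarrow> ('a \<Rightarrow> enat) \<Rightarrow> bool) \<Rightarrow> 'a set \<Rightarrow> 'a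
      \<Rightarrow> 'a set set \<times> ('a \<Rightarrow> enat) \<Rightarrow> 'a set set \<times> ('a \<Rightarrow> enat)"
  where "greedy_step P V x = (\<lambda>(E, f).
    if f x > 0 then (E - {{x, partner P V E f x}}, fxy f x (partner P V E f x)) else (E, f))"

primrec greedy ::
    "('a set \<Rightarrow> 'a set set \<Rightarrow> ('a \<Rightarrow> enat) \<Rightarrow> bool) \<Rightarrow> 'a set \<Rightarrow> 'a set set \<Rightarrow> ('a \<Rightarrow> enat)
      \<Rightarrow> nat \<Rightarrow> 'a set set \<times> ('a \<Rightarrow> enat)"
  where
    "greedy P V E f 0 = (E, f)"
  | "greedy P V E f (Suc n) = greedy_step P V (round_robin V n) (greedy P V E f n)"

locale greedy_factor =
  fixes V :: "'a set" and E :: "'a set set" and f :: "'a \<Rightarrow> enat"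
    and P :: "'a set \<Rightarrow> 'a set set \<Rightarrow> ('a \<Rightarrow> enat) \<Rightarrow> bool"
  assumes hereditary_P: "hereditary P" and holds_initial: "holds P V E f"
    and countable_V: "countable V"
begin

abbreviation "remaining n \<equiv> fst (greedy P V E f n)"
abbreviation "demand n \<equiv> snd (greedy P V E f n)"
abbreviation "visited n \<equiv> round_robin V n"
abbreviation "active n \<equiv> demand n (visited n) > 0"
abbreviation "mate n \<equiv> partner P V (remaining n) (demand n) (visited n)"
abbreviation "chosen n \<equiv> {visited n, mate n}"

definition uses :: "'a \<Rightarrow> nat set" where
  "uses v = {n. active n \<and> v \<in> chosen n}"

lemma visited_in: "visited n \<in> V"
  using holds_initial by (intro round_robin_in) (auto simp: holds_def inC_def is_graph_def)

lemma greedy_active: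
  "active n \<Longrightarrow> remaining (Suc n) = remaining n - {chosen n}
    \<and> demand (Suc n) = fxy (demand n) (visited n) (mate n)"
  by (simp add: greedy_step_def case_prod_beta)

lemma greedy_inactive: "\<not> active n \<Longrightarrow> greedy P V E f (Suc n) = greedy P V E f n"
  by (simp add: greedy_step_def case_prod_beta)

lemma holds_greedy: "holds P V (remaining n) (demand n)"
proof (induction n)
  case (Suc n)
  show ?case
  proof (cases "active n")
    case True
    then show ?thesis
      using greedy_active partner(4)[OF hereditary_P Suc visited_in True] by simp
  next
    case False
    then show ?thesis using greedy_inactive Suc by simp
  qed
qed (simp add: holds_initial)

lemma mate:
  assumes "active n"
  shows "demand n (mate n) > 0" "chosen n \<in> remaining n"
  using partner(2,3)[OF hereditary_P holds_greedy visited_in assms] by auto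

lemma remaining_antimono: "m \<le> n \<Longrightarrow> remaining n \<subseteq> remaining m"
proof (induction n rule: dec_induct)
  case (step n)
  have "remaining (Suc n) \<subseteq> remaining n"
    using greedy_active[of n] greedy_inactive[of n] by (cases "active n") auto
  with step show ?case by blast
qed simp

lemma chosen_in_E:
  assumes "active n"
  shows "chosen n \<in> E"
proof -
  have "remaining n \<subseteq> E" using remaining_antimono[of 0 n] by simp
  with mate(2)[OF assms] show ?thesis by blast
qed

lemma chosen_inj: "inj_on chosen {n. active n}"
proof -
  have distinct: "chosen m \<noteq> chosen n" if "active m" "active n" "m < n" for m n
  proof -
    have "chosen n \<in> remaining (Suc m)"
      using mate(2)[OF \<open>active n\<close>] remaining_antimono[OF Suc_leI[OF \<open>m < n\<close>]] by blast
    moreover have "chosen m \<notin> remaining (Suc m)"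
      using greedy_active[OF \<open>active m\<close>] by simp
    ultimately show ?thesis by metis
  qed
  show ?thesis
  proof (rule inj_onI)
    fix m n assume "m \<in> {n. active n}" "n \<in> {n. active n}" "chosen m = chosen n"
    then show "m = n"
      using distinct[of m n] distinct[of n m] by (cases m n rule: linorder_cases) auto
  qed
qed

lemma demand_infinite: "f v = \<infinity> \<Longrightarrow> demand n v = \<infinity>"
proof (induction n)
  case (Suc n)
  then show ?case
    using greedy_active[of n] greedy_inactive[of n] by (cases "active n") (auto simp: fxy_def)
qed simp

lemma uses_Suc:
  "uses v \<inter> {..<Suc n} = (if n \<in> uses v then insert n (uses v \<inter> {..<n}) else uses v \<inter> {..<n})"
  by (auto simp: lessThan_Suc)

lemma demand_plus_uses:
  assumes "f v \<noteq> \<infinity>"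
  shows "demand n v + enat (card (uses v \<inter> {..<n})) = f v"
proof (induction n)
  case 0
  then show ?case by (simp add: zero_enat_def[symmetric])
next
  case (Suc n)
  show ?case
  proof (cases "n \<in> uses v")
    case True
    then have "active n" and v: "v \<in> chosen n" by (auto simp: uses_def)
    then have pos: "demand n v > 0" using mate(1)[OF \<open>active n\<close>] by auto
    obtain k where k: "demand n v = enat k"
      using Suc assms by (cases "demand n v") auto
    with pos have "k > 0" by (simp add: zero_enat_def)
    have "demand (Suc n) v = enat k - 1"
      using greedy_active[OF \<open>active n\<close>] v pos k by (simp add: fxy_def ileI1 one_eSuc)
    also have "\<dots> = enat (k - 1)" by (simp add: one_enat_def)
    finally have "demand (Suc n) v + 1 = demand n v"
      using \<open>k > 0\<close> k by (simp add: one_enat_def)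
    moreover have "card (uses v \<inter> {..<Suc n}) = card (uses v \<inter> {..<n}) + 1"
      using True uses_Suc[of v n] by simp
    ultimately show ?thesis
      using Suc by (metis add.commute add.left_commute of_nat_Suc of_nat_eq_enat plus_1_eq_Suc)
  next
    case False
    have "demand (Suc n) v = demand n v"
      using greedy_active[of n] greedy_inactive[of n] False
      by (cases "active n") (auto simp: uses_def fxy_def)
    then show ?thesis using False Suc uses_Suc[of v n] by simp
  qed
qed

lemma uses_infinite:
  assumes "v \<in> V" "f v = \<infinity>"
  shows "infinite (uses v)"
  unfolding infinite_nat_iff_unbounded_le
proof
  fix N
  obtain m where "m \<ge> N" "visited m = v"
    using round_robin_recurs[OF countable_V \<open>v \<in> V\<close>] by blast
  with demand_infinite[OF \<open>f v = \<infinity>\<close>] show "\<exists>m\<ge>N. m \<in> uses v"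
    by (auto simp: uses_def)
qed

lemma uses_finite:
  assumes "v \<in> V" "f v = enat k"
  shows "finite (uses v) \<and> card (uses v) = k"
proof -
  have bounded: "card (uses v \<inter> {..<n}) \<le> k" for n
    using demand_plus_uses[of v n] assms(2) by (cases "demand n v") auto
  then have fin: "finite (uses v)"
    by (rule finite_nat_set_if_initial_counts_bounded)
  then obtain N where N: "uses v \<subseteq> {..<N}"
    using finite_nat_bounded by blast
  obtain m where m: "m \<ge> N" "visited m = v"
    using round_robin_recurs[OF countable_V \<open>v \<in> V\<close>] by blast
  have all_uses: "uses v \<inter> {..<m} = uses v"
    using N m(1) by auto
  have "m \<notin> uses v" using N m(1) by auto
  then have "demand m v = 0" using m(2) by (auto simp: uses_def)
  then have "card (uses v) = k"
    using demand_plus_uses[of v m] assms(2) all_uses by simp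
  with fin show ?thesis by blast
qed

lemma perfect_factor: "is_perfect_factor V E f (chosen ` {n. active n})"
proof -
  have deg: "deg (chosen ` {n. active n}) v =
      (if finite (uses v) then enat (card (uses v)) else \<infinity>)" for v
    using deg_image_inj[OF chosen_inj, of v] by (simp add: uses_def)
  have "deg (chosen ` {n. active n}) v = f v" if "v \<in> V" for v
    using uses_infinite[OF that] uses_finite[OF that] deg by (cases "f v") auto
  then show ?thesis
    unfolding is_perfect_factor_def using chosen_in_E by blast
qed

end

theorem theorem1:
  fixes V :: "'a set" and E :: "'a set set" and f :: "'a \<Rightarrow> enat"
    and P :: "'a set \<Rightarrow> 'a set set \<Rightarrow> ('a \<Rightarrow> enat) \<Rightarrow> bool"
  assumes "inC V E f"
    and "countable V" and "infinite V"
    and "hereditary P"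
    and "holds P V E f"
  shows "\<exists>F. is_perfect_factor V E f F"
proof -
  interpret greedy_factor V E f P
    using assms(2,4,5) by unfold_locales
  show ?thesis using perfect_factor by blast
qed

end
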